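(* Let $\nu\ge1$, $d:\mathbb{Z}^\nu\to\mathbb{C}$ bounded, $J=J_0+D$ on $\ell^2(\mathbb{Z}^\nu)$. If $\Im(d(k))\to0$ as $\|k\|_1\to\infty$, then every boundary eigenvalue of $J$ is real.
   Context: $\|k\|_1=\sum_{j=1}^\nu|k_j|$. $J_0$ is the discrete Laplacian on $\ell^2(\mathbb{Z}^\nu)$: $(J_0u)(k)=\sum_{l\in\mathbb{Z}^\nu:\|l\|_1=1}u(k+l)$. $D$ is multiplication by $d$. The numerical range is $\operatorname{Num}(J)=\{\langle Ju,u\rangle:\|u\|=1\}$, and a boundary eigenvalue of $J$ is an eigenvalue of $J$ lying in the topological boundary of $\operatorname{Num}(J)$. *)

theory Defs
  imports "HOL-Analysis.Analysis"
begin

text \<open>Lattice points of Z^nu are modelled as int^'n with 'n a finite type, nu = CARD('n) >= 1.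
  Vectors of l^2(Z^nu) are functions u :: int^'n => complex that are square summable.\<close>

definition norm1 :: "int ^ 'n \<Rightarrow> int" where
  "norm1 k = (\<Sum>j\<in>UNIV. \<bar>k $ j\<bar>)"

definition l2 :: "(int ^ 'n \<Rightarrow> complex) set" where
  "l2 = {u. (\<lambda>k. (cmod (u k))\<^sup>2) summable_on UNIV}"

definition l2_inner :: "(int ^ 'n \<Rightarrow> complex) \<Rightarrow> (int ^ 'n \<Rightarrow> complex) \<Rightarrow> complex" where
  "l2_inner u v = (\<Sum>\<^sub>\<infinity>k. u k * cnj (v k))"

definition l2_norm :: "(int ^ 'n \<Rightarrow> complex) \<Rightarrow> real" where
  "l2_norm u = sqrt (\<Sum>\<^sub>\<infinity>k. (cmod (u k))\<^sup>2)"

definition J0 :: "(int ^ 'n \<Rightarrow> complex) \<Rightarrow> (int ^ 'n \<Rightarrow> complex)" where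
  "J0 u = (\<lambda>k. \<Sum>l\<in>{l. norm1 l = 1}. u (k + l))"

definition Jop :: "(int ^ 'n \<Rightarrow> complex) \<Rightarrow> (int ^ 'n \<Rightarrow> complex) \<Rightarrow> (int ^ 'n \<Rightarrow> complex)" where
  "Jop d u = (\<lambda>k. J0 u k + d k * u k)"

definition numerical_range :: "(int ^ 'n \<Rightarrow> complex) \<Rightarrow> complex set" where
  "numerical_range d = {l2_inner (Jop d u) u | u. u \<in> l2 \<and> l2_norm u = 1}"

definition is_eigenvalue :: "(int ^ 'n \<Rightarrow> complex) \<Rightarrow> complex \<Rightarrow> bool" where
  "is_eigenvalue d c \<longleftrightarrow> (\<exists>u\<in>l2. u \<noteq> (\<lambda>_. 0) \<and> Jop d u = (\<lambda>k. c * u k))"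

definition boundary_eigenvalue :: "(int ^ 'n \<Rightarrow> complex) \<Rightarrow> complex \<Rightarrow> bool" where
  "boundary_eigenvalue d c \<longleftrightarrow> is_eigenvalue d c \<and> c \<in> frontier (numerical_range d)"

end

theory Submission
  imports Defs
begin

(*
  Let z be an eigenvalue with eigenvector u and suppose Im z \<noteq> 0.  Two cases:

  (1) Some lattice point k carries u k \<noteq> 0 and Im (d k) \<noteq> Im z.  Perturb u to
      w_t = u + t \<delta>_k.  The Rayleigh quotient <J w_t, w_t> / \<parallel>w_t\<parallel>^2 is an explicit
      rational function of (t, cnj t) taking the value z at t = 0, and its real
      derivative at 0 is multiplication by a complex number proportional to
      Im (d k) - Im z, hence invertible.  By the open mapping theorem for maps with
      surjective derivative, z lies in the interior of Num(J): not a boundary point.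

  (2) Otherwise Im (d k) = Im z on the support of u; since Im d decays, this support is
      bounded.  A finitely supported eigenvector vanishes: at the lattice point just
      above the top of the support in one coordinate direction, the eigenvalue
      equation reads u (top) = 0.
*)

lemma norm1_component_le: "\<bar>l $ j\<bar> \<le> norm1 (l :: int ^ 'n)"
  unfolding norm1_def by (rule member_le_sum) auto

lemma norm1_uminus: "norm1 (- l) = norm1 (l :: int ^ 'n)"
  unfolding norm1_def by simp

lemma norm1_axis: "norm1 (axis j 1 :: int ^ 'n) = 1"
proof -
  have "norm1 (axis j 1 :: int ^ 'n) = (\<Sum>i\<in>UNIV. if i = j then 1 else 0)"
    unfolding norm1_def axis_def by (intro sum.cong) auto
  also have "\<dots> = 1" by simp
  finally show ?thesis .
qed

lemma finite_unit_sphere: "finite {l :: int ^ 'n. norm1 l = 1}"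
proof -
  have "{l :: int ^ 'n. norm1 l = 1} \<subseteq> vec_lambda ` (PiE UNIV (\<lambda>_. {-1..1}))"
  proof
    fix l :: "int ^ 'n" assume "l \<in> {l. norm1 l = 1}"
    then have "(\<lambda>j. l $ j) \<in> PiE UNIV (\<lambda>_. {-1..1})"
      using norm1_component_le[of l] by (auto simp: abs_le_iff)
    then show "l \<in> vec_lambda ` (PiE UNIV (\<lambda>_. {-1..1}))"
      by (metis image_eqI vec_lambda_eta)
  qed
  moreover have "finite (PiE (UNIV :: 'n set) (\<lambda>_. {-1..1 :: int}))"
    by (intro finite_PiE) auto
  ultimately show ?thesis by (meson finite_imageI finite_subset)
qed

lemma unit_step_down:
  fixes l :: "int ^ 'n"
  assumes "norm1 l = 1" "l $ j = -1"
  shows "l = - axis j 1"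
proof -
  have "norm1 l = \<bar>l $ j\<bar> + (\<Sum>i\<in>UNIV - {j}. \<bar>l $ i\<bar>)"
    unfolding norm1_def by (simp add: sum.remove)
  then have "(\<Sum>i\<in>UNIV - {j}. \<bar>l $ i\<bar>) = 0" using assms by simp
  then have "\<forall>i\<in>UNIV - {j}. l $ i = 0"
    by (subst (asm) sum_nonneg_eq_0_iff) auto
  then show ?thesis using assms by (auto simp: vec_eq_iff axis_def)
qed

section \<open>Finitely supported eigenvectors vanish\<close>

lemma J0_on_upper_boundary:
  fixes u :: "int ^ 'n \<Rightarrow> complex"
  assumes vanish: "\<And>p. p $ j \<ge> m $ j \<Longrightarrow> u p = 0"
  shows "J0 u m = u (m - axis j 1)"
proof -
  let ?S = "{l :: int ^ 'n. norm1 l = 1}"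
  have down: "- axis j 1 \<in> ?S" by (simp add: norm1_uminus norm1_axis)
  have others: "u (m + l) = 0" if "l \<in> ?S - {- axis j 1}" for l
  proof -
    have l: "norm1 l = 1" "l \<noteq> - axis j 1" using that by auto
    have "\<bar>l $ j\<bar> \<le> 1" using norm1_component_le[of l j] l(1) by simp
    moreover have "l $ j \<noteq> -1" using unit_step_down[OF l(1)] l(2) by blast
    ultimately have "l $ j \<ge> 0" by (auto simp: abs_le_iff)
    then show ?thesis by (intro vanish) simp
  qed
  have "(\<Sum>l\<in>?S - {- axis j 1}. u (m + l)) = 0"
    by (rule sum.neutral) (use others in blast)
  moreover have "J0 u m = u (m + - axis j 1) + (\<Sum>l\<in>?S - {- axis j 1}. u (m + l))"
    unfolding J0_def by (rule sum.remove[OF finite_unit_sphere down])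
  ultimately show ?thesis by simp
qed

lemma bounded_support_eigenvector_zero:
  fixes u :: "int ^ 'n \<Rightarrow> complex" and R :: int
  assumes eigen: "Jop d u = (\<lambda>k. z * u k)"
    and supp: "\<And>k. u k \<noteq> 0 \<Longrightarrow> norm1 k \<le> R"
  shows "u = (\<lambda>_. 0)"
proof (rule ccontr)
  assume "u \<noteq> (\<lambda>_. 0)"
  obtain j :: 'n where True by blast \<comment> \<open>any coordinate direction will do\<close>
  define V where "V = (\<lambda>k. k $ j) ` {k. u k \<noteq> 0}"
  have "V \<subseteq> {-R..R}"
  proof
    fix x assume "x \<in> V"
    then obtain k where "u k \<noteq> 0" "x = k $ j" by (auto simp: V_def)
    then show "x \<in> {-R..R}" using norm1_component_le[of k j] supp[of k] by (auto simp: abs_le_iff)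
  qed
  then have "finite V" by (rule finite_subset) simp
  moreover have "V \<noteq> {}" using \<open>u \<noteq> (\<lambda>_. 0)\<close> by (auto simp: V_def)
  ultimately have "Max V \<in> V" by (rule Max_in)
  then obtain k where k: "u k \<noteq> 0" "k $ j = Max V" by (auto simp: V_def)
  have below_top: "p $ j \<le> Max V" if "u p \<noteq> 0" for p
    using that \<open>finite V\<close> by (auto simp: V_def)
  then have above_top: "u p = 0" if "p $ j > Max V" for p
    using that by force
  define m where "m = k + axis j 1"
  have "u m = 0" by (rule above_top) (simp add: m_def k)
  then have "J0 u m = 0" using fun_cong[OF eigen, of m] by (simp add: Jop_def)
  moreover have "J0 u m = u k"
  proof -
    have "u p = 0" if "p $ j \<ge> m $ j" for p
      using that by (intro above_top) (simp add: m_def k)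
    then have "J0 u m = u (m - axis j 1)" by (rule J0_on_upper_boundary)
    then show ?thesis by (simp add: m_def)
  qed
  ultimately show False using k by simp
qed

text \<open>The perturbed vectors differ from u at finitely many points only, so their norms and
  quadratic forms are the old infinite sums plus a finite correction.\<close>
lemma infsum_finite_modification:
  fixes f g :: "'a \<Rightarrow> 'b :: {topological_ab_group_add, t2_space}"
  assumes "f summable_on UNIV" "finite F" "\<And>x. x \<notin> F \<Longrightarrow> g x = f x"
  shows "g summable_on UNIV" "infsum g UNIV = infsum f UNIV + (\<Sum>x\<in>F. g x - f x)"
proof -
  define h where "h x = (if x \<in> F then g x - f x else 0)" for x
  have h: "h summable_on UNIV" "infsum h UNIV = (\<Sum>x\<in>F. g x - f x)"
    using summable_on_cong_neutral[where f = "\<lambda>x. g x - f x" and g = h and S = F and T = UNIV]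
      infsum_cong_neutral[where f = "\<lambda>x. g x - f x" and g = h and S = F and T = UNIV] assms(2)
    by (auto simp: h_def)
  have g: "g = (\<lambda>x. f x + h x)" using assms(3) by (auto simp: h_def fun_eq_iff)
  show "g summable_on UNIV" unfolding g by (rule summable_on_add[OF assms(1) h(1)])
  show "infsum g UNIV = infsum f UNIV + (\<Sum>x\<in>F. g x - f x)"
    unfolding g infsum_add[OF assms(1) h(1)] h(2) ..
qed

lemma infsum_of_real:
  assumes "(f :: 'a \<Rightarrow> real) summable_on UNIV"
  shows "(\<Sum>\<^sub>\<infinity>m. complex_of_real (f m)) = complex_of_real (infsum f UNIV)"
  using assms has_sum_of_real_iff[of f UNIV "infsum f UNIV", where 'a = complex]
  by (simp add: infsumI)

lemma of_real_cmod_square: "(complex_of_real (cmod x))\<^sup>2 = x * cnj x"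
  by (metis complex_norm_square of_real_power)

lemma Jop_scale: "Jop d (\<lambda>m. a * v m) = (\<lambda>m. a * Jop d v m)"
  unfolding Jop_def J0_def by (auto simp: fun_eq_iff sum_distrib_left algebra_simps)

lemma rayleigh_quotient_in_numerical_range:
  fixes v :: "int ^ 'n \<Rightarrow> complex"
  assumes "v \<in> l2" and V_pos: "(\<Sum>\<^sub>\<infinity>m. (cmod (v m))\<^sup>2) > 0"
  shows "l2_inner (Jop d v) v / of_real (\<Sum>\<^sub>\<infinity>m. (cmod (v m))\<^sup>2) \<in> numerical_range d"
proof -
  define V where "V = (\<Sum>\<^sub>\<infinity>m. (cmod (v m))\<^sup>2)"
  define s where "s = 1 / sqrt V"
  define v' where "v' = (\<lambda>m. complex_of_real s * v m)"
  have s2: "s\<^sup>2 = 1 / V" using V_pos by (simp add: V_def s_def power_divide)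
  have sq: "(cmod (v' m))\<^sup>2 = s\<^sup>2 * (cmod (v m))\<^sup>2" for m
    by (simp add: v'_def norm_mult power_mult_distrib)
  have "(\<lambda>m. (cmod (v m))\<^sup>2) summable_on UNIV" using assms(1) by (simp add: l2_def)
  then have "v' \<in> l2" unfolding l2_def using summable_on_cmult_right[of _ UNIV "s\<^sup>2"] sq by simp
  moreover have "l2_norm v' = 1"
    using V_pos unfolding l2_norm_def sq infsum_cmult_right' s2 by (simp add: V_def)
  moreover have "l2_inner (Jop d v') v' = l2_inner (Jop d v) v / of_real V"
  proof -
    have "l2_inner (Jop d v') v' = (\<Sum>\<^sub>\<infinity>m. complex_of_real (s\<^sup>2) * (Jop d v m * cnj (v m)))"
      unfolding l2_inner_def v'_def Jop_scale
      by (intro infsum_cong) (simp add: power2_eq_square algebra_simps)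
    also have "\<dots> = complex_of_real (s\<^sup>2) * l2_inner (Jop d v) v"
      unfolding l2_inner_def by (rule infsum_cmult_right')
    finally show ?thesis by (simp add: s2)
  qed
  ultimately show ?thesis unfolding numerical_range_def V_def
    by (intro CollectI exI[of _ v']) simp
qed

section \<open>Rank-one perturbations of an eigenvector\<close>

definition lattice_delta :: "int ^ 'n \<Rightarrow> int ^ 'n \<Rightarrow> complex" where
  "lattice_delta k = (\<lambda>m. if m = k then 1 else 0)"

lemma l2_norm_square_perturbation:
  fixes u :: "int ^ 'n \<Rightarrow> complex" and t :: complex and k :: "int ^ 'n"
  assumes "u \<in> l2" and w_def: "w = (\<lambda>m. u m + t * lattice_delta k m)"
  shows "w \<in> l2"
    and "complex_of_real (\<Sum>\<^sub>\<infinity>m. (cmod (w m))\<^sup>2)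
       = complex_of_real (\<Sum>\<^sub>\<infinity>m. (cmod (u m))\<^sup>2) + cnj t * u k + t * cnj (u k) + t * cnj t"
proof -
  have u: "(\<lambda>m. (cmod (u m))\<^sup>2) summable_on UNIV" using assms(1) by (simp add: l2_def)
  have off_k: "(cmod (w m))\<^sup>2 = (cmod (u m))\<^sup>2" if "m \<notin> {k}" for m
    using that by (simp add: w_def lattice_delta_def)
  note modified = infsum_finite_modification[OF u finite.insertI[OF finite.emptyI] off_k]
  show "w \<in> l2" using modified(1) by (simp add: l2_def)
  have "complex_of_real ((cmod (w k))\<^sup>2 - (cmod (u k))\<^sup>2) = cnj t * u k + t * cnj (u k) + t * cnj t"
    unfolding of_real_diff complex_norm_square by (simp add: w_def lattice_delta_def algebra_simps)
  then show "complex_of_real (\<Sum>\<^sub>\<infinity>m. (cmod (w m))\<^sup>2)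
       = complex_of_real (\<Sum>\<^sub>\<infinity>m. (cmod (u m))\<^sup>2) + cnj t * u k + t * cnj (u k) + t * cnj t"
    using modified(2) by simp
qed

text \<open>The closed unit l^1 ball around k: the only points where J \<delta>_k can be nonzero.\<close>
definition lattice_star :: "int ^ 'n \<Rightarrow> (int ^ 'n) set" where
  "lattice_star k = insert k ((\<lambda>l. k - l) ` {l. norm1 l = 1})"

lemma finite_lattice_star: "finite (lattice_star k)"
  unfolding lattice_star_def by (intro finite.insertI finite_imageI finite_unit_sphere)

lemma J0_delta: "J0 (lattice_delta k) m = (\<Sum>l\<in>{l. norm1 l = 1}. if m = k - l then 1 else 0)"
  unfolding J0_def lattice_delta_def by (intro sum.cong) (auto simp: algebra_simps)

lemma Jop_delta_outside_star:
  assumes "m \<notin> lattice_star k"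
  shows "Jop d (lattice_delta k) m = 0"
  using assms unfolding Jop_def J0_delta
  by (auto simp: lattice_star_def lattice_delta_def intro!: sum.neutral)

lemma Jop_delta_centre: "Jop d (lattice_delta k) k = d k"
  unfolding Jop_def J0_delta by (auto simp: lattice_delta_def norm1_def intro!: sum.neutral)

lemma sum_times_delta:
  assumes "finite F" "k \<in> F"
  shows "(\<Sum>m\<in>F. h m * lattice_delta k m) = h k"
  using assms by (simp add: lattice_delta_def if_distrib cong: if_cong)

text \<open>Symmetry of J tested against \<delta>_k: the sum of J \<delta>_k against cnj u over any finite set
  containing the star of k equals cnj of (J0 u + D u) at k.\<close>
lemma Jop_delta_pairing:
  fixes u :: "int ^ 'n \<Rightarrow> complex"
  assumes F: "finite F" "lattice_star k \<subseteq> F"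
  shows "(\<Sum>m\<in>F. Jop d (lattice_delta k) m * cnj (u m)) = cnj (J0 u k) + d k * cnj (u k)"
proof -
  let ?S = "{l :: int ^ 'n. norm1 l = 1}"
  have "(\<Sum>m\<in>F. J0 (lattice_delta k) m * cnj (u m))
      = (\<Sum>l\<in>?S. \<Sum>m\<in>F. if m = k - l then cnj (u m) else 0)"
    unfolding J0_delta sum_distrib_right by (subst sum.swap) (intro sum.cong refl; simp)
  also have "\<dots> = (\<Sum>l\<in>?S. cnj (u (k - l)))"
    using F by (intro sum.cong) (auto simp: lattice_star_def)
  also have "\<dots> = (\<Sum>l\<in>?S. cnj (u (k + l)))"
    by (rule sum.reindex_bij_witness[of _ uminus uminus]) (auto simp: norm1_uminus)
  finally have J0_part: "(\<Sum>m\<in>F. J0 (lattice_delta k) m * cnj (u m)) = cnj (J0 u k)"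
    by (simp add: J0_def)
  have D_part: "(\<Sum>m\<in>F. d m * cnj (u m) * lattice_delta k m) = d k * cnj (u k)"
    using F by (intro sum_times_delta) (auto simp: lattice_star_def)
  have "(\<Sum>m\<in>F. Jop d (lattice_delta k) m * cnj (u m))
      = (\<Sum>m\<in>F. J0 (lattice_delta k) m * cnj (u m)) + (\<Sum>m\<in>F. d m * cnj (u m) * lattice_delta k m)"
    unfolding Jop_def by (simp add: sum.distrib algebra_simps)
  then show ?thesis unfolding J0_part D_part .
qed

lemma Jop_add: "Jop d (\<lambda>m. u m + t * v m) = (\<lambda>m. Jop d u m + t * Jop d v m)"
  unfolding Jop_def J0_def by (auto simp: fun_eq_iff sum.distrib sum_distrib_left algebra_simps)

text \<open>The quadratic form of J on u + t \<delta>_k, for an eigenvector u with eigenvalue z.  Away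
  from the star of k the summand is z |u m|^2, so only finitely many terms change.\<close>
lemma quadratic_form_perturbation:
  fixes u :: "int ^ 'n \<Rightarrow> complex" and t :: complex and k :: "int ^ 'n"
  assumes "u \<in> l2" and eigen: "Jop d u = (\<lambda>m. z * u m)"
    and w_def: "w = (\<lambda>m. u m + t * lattice_delta k m)"
  shows "l2_inner (Jop d w) w = z * complex_of_real (\<Sum>\<^sub>\<infinity>m. (cmod (u m))\<^sup>2) + z * cnj t * u k
     + t * (cnj ((z - d k) * u k) + d k * cnj (u k)) + t * cnj t * d k"
proof -
  let ?\<delta> = "lattice_delta k" and ?F = "lattice_star k"
  have k: "k \<in> ?F" by (simp add: lattice_star_def)
  have Jw: "Jop d w m = z * u m + t * Jop d ?\<delta> m" for m
    using Jop_add[of d u t ?\<delta>] eigen by (simp add: w_def fun_eq_iff)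
  have J0_u: "J0 u k = (z - d k) * u k"
    using fun_cong[OF eigen, of k] by (simp add: Jop_def algebra_simps)
  have u: "(\<lambda>m. (cmod (u m))\<^sup>2) summable_on UNIV" using assms(1) by (simp add: l2_def)
  define f where "f m = z * complex_of_real ((cmod (u m))\<^sup>2)" for m
  define g where "g m = Jop d w m * cnj (w m)" for m
  have f: "f summable_on UNIV" "infsum f UNIV = z * complex_of_real (\<Sum>\<^sub>\<infinity>m. (cmod (u m))\<^sup>2)"
    unfolding f_def infsum_cmult_right' infsum_of_real[OF u]
    by (intro summable_on_cmult_right summable_on_of_real u) simp
  have "g m = f m" if "m \<notin> ?F" for m
    using that k Jop_delta_outside_star[OF that]
    unfolding g_def f_def Jw by (auto simp: w_def lattice_delta_def of_real_cmod_square)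
  note modified = infsum_finite_modification[OF f(1) finite_lattice_star this]
  have g_minus_f: "g m - f m = t * (Jop d ?\<delta> m * cnj (u m)) + z * cnj t * (u m * ?\<delta> m)
      + t * cnj t * (Jop d ?\<delta> m * ?\<delta> m)" for m
    unfolding g_def f_def Jw by (simp add: w_def of_real_cmod_square lattice_delta_def algebra_simps)
  have "l2_inner (Jop d w) w = infsum g UNIV"
    unfolding l2_inner_def g_def ..
  also have "\<dots> = infsum f UNIV + (\<Sum>m\<in>?F. g m - f m)" by (rule modified(2))
  finally show ?thesis
    unfolding g_minus_f sum.distrib sum_distrib_left[symmetric] f(2) J0_u[symmetric]
      Jop_delta_pairing[OF finite_lattice_star order_refl]
      sum_times_delta[OF finite_lattice_star k] Jop_delta_centre
    by (simp add: algebra_simps)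
qed

section \<open>An open mapping step\<close>

text \<open>The Rayleigh quotient of u + t \<delta>_k has the shape N t / D t below.\<close>
lemma rational_quotient_open_at_zero:
  fixes U :: real and z b p q :: complex
  assumes U: "U > 0" and nondegenerate: "b - z * cnj p \<noteq> 0"
  defines "N \<equiv> (\<lambda>t. z * U + z * cnj t * p + t * b + t * cnj t * q)"
    and "D \<equiv> (\<lambda>t. complex_of_real U + cnj t * p + t * cnj p + t * cnj t)"
  shows "z \<in> interior ((\<lambda>t. N t / D t) ` {t. D t \<noteq> 0})"
proof -
  define c where "c = (b - z * cnj p) / complex_of_real U"
  have c: "c \<noteq> 0" using nondegenerate U by (simp add: c_def)
  have D0: "D 0 = complex_of_real U" by (simp add: D_def)
  have "continuous_on UNIV D" unfolding D_def by (intro continuous_intros)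
  then have open_dom: "open {t. D t \<noteq> 0}"
    by (simp add: open_Collect_neq continuous_on_const)
  have cont: "continuous_on {t. D t \<noteq> 0} (\<lambda>t. N t / D t)"
    unfolding N_def D_def by (intro continuous_intros) auto
  have deriv: "((\<lambda>t. N t / D t) has_derivative (\<lambda>h. h * c)) (at 0)"
    unfolding N_def D_def
    apply (rule derivative_eq_intros | simp)+
    using U by (auto simp: fun_eq_iff c_def field_simps)
  have "(\<lambda>t. N t / D t) 0 \<in> interior ((\<lambda>t. N t / D t) ` {t. D t \<noteq> 0})"
  proof (rule sussmann_open_mapping[OF open_dom cont _ deriv, where g' = "\<lambda>h. h / c"])
    show "0 \<in> {t. D t \<noteq> 0}" using D0 U by simp
    show "bounded_linear (\<lambda>h :: complex. h / c)" by (rule bounded_linear_divide)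
    show "(\<lambda>h. h * c) \<circ> (\<lambda>h. h / c) = id" using c by (auto simp: fun_eq_iff)
    show "0 \<in> interior {t. D t \<noteq> 0}" using open_dom D0 U by (simp add: interior_open)
  qed simp
  moreover have "(\<lambda>t. N t / D t) 0 = z" using U by (simp add: N_def D_def)
  ultimately show ?thesis by simp
qed

lemma l2_norm_square_pos:
  fixes u :: "int ^ 'n \<Rightarrow> complex"
  assumes "u \<in> l2" "u k \<noteq> 0"
  shows "(\<Sum>\<^sub>\<infinity>m. (cmod (u m))\<^sup>2) > 0"
proof -
  have "(\<lambda>m. (cmod (u m))\<^sup>2) summable_on UNIV" using assms(1) by (simp add: l2_def)
  then have "(\<Sum>m\<in>{k}. (cmod (u m))\<^sup>2) \<le> (\<Sum>\<^sub>\<infinity>m. (cmod (u m))\<^sup>2)"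
    by (rule finite_sum_le_infsum) auto
  then have "(cmod (u k))\<^sup>2 \<le> (\<Sum>\<^sub>\<infinity>m. (cmod (u m))\<^sup>2)" by simp
  moreover have "(cmod (u k))\<^sup>2 > 0" using assms(2) by simp
  ultimately show ?thesis by linarith
qed

lemma eigenvalue_interior_of_numerical_range:
  fixes u :: "int ^ 'n \<Rightarrow> complex"
  assumes u: "u \<in> l2" and eigen: "Jop d u = (\<lambda>m. z * u m)"
    and k: "u k \<noteq> 0" "Im (d k) \<noteq> Im z"
  shows "z \<in> interior (numerical_range d)"
proof -
  \<comment> \<open>N t and D t are the quadratic form and squared norm of u + t \<delta>_k\<close>
  define U where "U = (\<Sum>\<^sub>\<infinity>m. (cmod (u m))\<^sup>2)"
  define b where "b = cnj ((z - d k) * u k) + d k * cnj (u k)"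
  define N where "N = (\<lambda>t. z * U + z * cnj t * u k + t * b + t * cnj t * d k)"
  define D where "D = (\<lambda>t. complex_of_real U + cnj t * u k + t * cnj (u k) + t * cnj t)"
  have "b - z * cnj (u k) = cnj (u k) * (2 * \<i> * complex_of_real (Im (d k) - Im z))"
    by (simp add: b_def complex_eq_iff algebra_simps)
  then have "b - z * cnj (u k) \<noteq> 0" using k by simp
  then have "z \<in> interior ((\<lambda>t. N t / D t) ` {t. D t \<noteq> 0})"
    unfolding N_def D_def
    by (intro rational_quotient_open_at_zero) (auto simp: U_def l2_norm_square_pos[OF u k(1)])
  moreover have "(\<lambda>t. N t / D t) ` {t. D t \<noteq> 0} \<subseteq> numerical_range d"
  proof clarify
    fix t assume "D t \<noteq> 0"
    define w where "w = (\<lambda>m. u m + t * lattice_delta k m)"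
    note norm_w = l2_norm_square_perturbation[OF u w_def]
    have "complex_of_real (\<Sum>\<^sub>\<infinity>m. (cmod (w m))\<^sup>2) = D t"
      using norm_w(2) by (simp add: D_def U_def)
    moreover have "l2_inner (Jop d w) w = N t"
      using quadratic_form_perturbation[OF u eigen w_def]
      by (simp add: N_def U_def b_def)
    moreover have "(\<Sum>\<^sub>\<infinity>m. (cmod (w m))\<^sup>2) > 0"
      using \<open>D t \<noteq> 0\<close> calculation(1) infsum_nonneg[of UNIV "\<lambda>m. (cmod (w m))\<^sup>2"]
      by (auto simp: order_le_less)
    ultimately show "N t / D t \<in> numerical_range d"
      using rayleigh_quotient_in_numerical_range[OF norm_w(1)] by metis
  qed
  ultimately show ?thesis using interior_mono by blast
qed

theorem mainTheorem7:
  fixes d :: "int ^ 'n \<Rightarrow> complex" and z :: complex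
  assumes bounded: "\<exists>C. \<forall>k. cmod (d k) \<le> C"
    and im_decay: "\<forall>\<epsilon>>0. \<exists>R. \<forall>k. norm1 k > R \<longrightarrow> \<bar>Im (d k)\<bar> < \<epsilon>"
    and "boundary_eigenvalue d z"
  shows "z \<in> \<real>"
proof (rule ccontr)
  assume "z \<notin> \<real>"
  then have "Im z \<noteq> 0" by (simp add: complex_is_Real_iff)
  from assms(3) obtain u where u: "u \<in> l2" "u \<noteq> (\<lambda>_. 0)" and eigen: "Jop d u = (\<lambda>k. z * u k)"
    and boundary: "z \<notin> interior (numerical_range d)"
    unfolding boundary_eigenvalue_def is_eigenvalue_def frontier_def by blast
  then have same_Im: "Im (d k) = Im z" if "u k \<noteq> 0" for k
    using eigenvalue_interior_of_numerical_range that by blast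
  obtain R where R: "\<forall>k. norm1 k > R \<longrightarrow> \<bar>Im (d k)\<bar> < \<bar>Im z\<bar>"
    using im_decay \<open>Im z \<noteq> 0\<close> by (meson zero_less_abs_iff)
  have "norm1 k \<le> R" if "u k \<noteq> 0" for k
    using R[rule_format, of k] same_Im[OF that] by force
  then have "u = (\<lambda>_. 0)" by (rule bounded_support_eigenvector_zero[OF eigen])
  with u(2) show False ..
qed

end
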